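(* For every integer $n$ with $1\le n\le N$, every integer $j\ge 0$ and all $x,y$ with $x-y\notin\{0,1,\dots,j\}$, $$\mathscr K_{n-1}^{(0,j)}(x,y)=\mathscr A_n^{(j)}(x,y)\,K_n(x)+\mathscr B_n^{(j)}(x,y)\,K_{n-1}(x),$$ where $$\mathscr A_n^{(j)}(x,y)=\frac{j!}{\|K_{n-1}\|^2\,[x-y]_{j+1}}\sum_{k=0}^{j}\frac{\Delta^kK_{n-1}(y)}{k!}[x-y]_k,\qquad \mathscr B_n^{(j)}(x,y)=-\frac{j!}{\|K_{n-1}\|^2\,[x-y]_{j+1}}\sum_{k=0}^{j}\frac{\Delta^kK_{n}(y)}{k!}[x-y]_k .$$
   Context: Fix an integer $N\ge 1$ and $0<p<1$. Notation: $(a)_0=1$, $(a)_k=a(a+1)\cdots(a+k-1)$ (Pochhammer symbol); $[z]_0=1$, $[z]_k=z(z-1)\cdots(z-k+1)$ (falling factorial). For a function $f$, $\Delta f(x)=f(x+1)-f(x)$, $\nabla f(x)=f(x)-f(x-1)$, $\Delta^0$ is the identity and $\Delta^k=\Delta\circ\Delta^{k-1}$; $\Delta_x,\Delta_y$ denote $\Delta$ acting in the indicated variable. For $0\le n\le N$ the monic Kravchuk polynomial is $K_n(x)=p^n(-N)_n\sum_{k=0}^{n}\frac{(-n)_k(-x)_k}{(-N)_k\,k!}p^{-k}$, and $K_{-1}=0$; these are monic of degree $n$ and orthogonal on $\{0,\dots,N\}$ with respect to the binomial weight $w(x)=\binom{N}{x}p^x(1-p)^{N-x}$, with $\|K_n\|^2=\sum_{x=0}^N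 K_n(x)^2w(x)=n!(-N)_np^n(p-1)^n$. For $1\le n\le N+1$ and integers $i,l\ge0$, the differenced reproducing kernel is $\mathscr K_{n-1}^{(i,l)}(x,y)=\sum_{k=0}^{n-1}\frac{\Delta^iK_k(x)\,\Delta^lK_k(y)}{\|K_k\|^2}$ (i.e. $\Delta_x^i\Delta_y^l$ applied to $\sum_{k=0}^{n-1}K_k(x)K_k(y)/\|K_k\|^2$). *)

theory Defs
  imports Complex_Main
begin

definition falling :: "real \<Rightarrow> nat \<Rightarrow> real" where
  "falling z k = (\<Prod>i<k. z - real i)"

definition fdiff :: "(real \<Rightarrow> real) \<Rightarrow> real \<Rightarrow> real" where
  "fdiff f x = f (x + 1) - f x"

definition fdiff_pow :: "nat \<Rightarrow> (real \<Rightarrow> real) \<Rightarrow> real \<Rightarrow> real" where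
  "fdiff_pow k f = (fdiff ^^ k) f"

(* monic Kravchuk polynomial K_n(x); kravchuk N p n with n = -1 is not needed
   since we only use 0 <= n *)
definition kravchuk :: "nat \<Rightarrow> real \<Rightarrow> nat \<Rightarrow> real \<Rightarrow> real" where
  "kravchuk N p n x = p ^ n * pochhammer (- real N) n *
     (\<Sum>k=0..n. pochhammer (- real n) k * pochhammer (- x) k /
                 (pochhammer (- real N) k * fact k) * p powi (- int k))"

definition kweight :: "nat \<Rightarrow> real \<Rightarrow> nat \<Rightarrow> real" where
  "kweight N p x = real (N choose x) * p ^ x * (1 - p) ^ (N - x)"

definition knorm2 :: "nat \<Rightarrow> real \<Rightarrow> nat \<Rightarrow> real" where
  "knorm2 N p n = (\<Sum>x=0..N. (kravchuk N p n (real x))^2 * kweight N p x)"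

(* differenced reproducing kernel K_{n-1}^{(i,l)}(x,y) *)
definition kkernel :: "nat \<Rightarrow> real \<Rightarrow> nat \<Rightarrow> nat \<Rightarrow> nat \<Rightarrow> real \<Rightarrow> real \<Rightarrow> real" where
  "kkernel N p n i l x y = (\<Sum>k<n. fdiff_pow i (kravchuk N p k) x *
                                  fdiff_pow l (kravchuk N p k) y / knorm2 N p k)"

definition kA :: "nat \<Rightarrow> real \<Rightarrow> nat \<Rightarrow> nat \<Rightarrow> real \<Rightarrow> real \<Rightarrow> real" where
  "kA N p n j x y = fact j / (knorm2 N p (n - 1) * falling (x - y) (j + 1)) *
     (\<Sum>k=0..j. fdiff_pow k (kravchuk N p (n - 1)) y / fact k * falling (x - y) k)"

definition kB :: "nat \<Rightarrow> real \<Rightarrow> nat \<Rightarrow> nat \<Rightarrow> real \<Rightarrow> real \<Rightarrow> real" where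
  "kB N p n j x y = - (fact j / (knorm2 N p (n - 1) * falling (x - y) (j + 1)) *
     (\<Sum>k=0..j. fdiff_pow k (kravchuk N p n) y / fact k * falling (x - y) k))"

end

theory Submission
  imports Defs "HOL-Computational_Algebra.Polynomial"
begin

text \<open>
  Since the differences act on the second variable only, the kernel is the j-th forward
  difference at y of the function t \<mapsto> sum over k < n of K_k(x) K_k(t) / ||K_k||^2. At the
  points t = y, ..., y + j, all different from x, the Christoffel--Darboux formula turns this sum
  into g(t) / (x - t) with g = (K_n(x) K_(n-1) - K_(n-1)(x) K_n) / ||K_(n-1)||^2. An induction on j
  shows that the j-th difference of g(t) / (x - t) at y equals
  j! / [x - y]_(j+1) times the sum over k \<le> j of \<Delta>^k g(y) [x - y]_k / k!,
  and splitting g into its two terms gives the coefficients A and B.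

  Christoffel--Darboux follows from the three-term recurrence, as for any monic family that is
  orthogonal for a positive weight on a finite set. Orthogonality of the Kravchuk polynomials is
  checked against the basis [N - x]_m: the binomial factorial moments reduce the weighted sum to an
  alternating binomial sum of falling factorials of degree m < n, which vanishes.
\<close>

section \<open>Falling factorials and forward differences\<close>

lemma falling_0 [simp]: "falling z 0 = 1"
  by (simp add: falling_def)

lemma falling_Suc: "falling z (Suc k) = falling z k * (z - real k)"
  by (simp add: falling_def)

lemma falling_Suc_shift: "falling z (Suc k) = z * falling (z - 1) k"
  unfolding falling_def prod.lessThan_Suc_shift by (simp add: algebra_simps)

lemma falling_nonzero: "(\<And>i. i < k \<Longrightarrow> z \<noteq> real i) \<Longrightarrow> falling z k \<noteq> 0"
  by (simp add: falling_def)

lemma falling_eq_pochhammer: "falling z k = (-1) ^ k * pochhammer (- z) k"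
proof -
  have "falling z k = (\<Prod>i<k. (-1::real) * (- z + real i))"
    unfolding falling_def by (intro prod.cong) auto
  also have "\<dots> = (\<Prod>i<k. (-1::real)) * (\<Prod>i<k. - z + real i)"
    by (rule prod.distrib)
  also have "\<dots> = (-1) ^ k * pochhammer (- z) k"
    by (simp add: pochhammer_prod atLeast0LessThan)
  finally show ?thesis .
qed

lemma pochhammer_minus: "pochhammer (- z) k = (-1) ^ k * falling z k"
  by (simp add: falling_eq_pochhammer)

lemma pochhammer_minus_of_nat: "pochhammer (- real r) k = (-1) ^ k * fact k * real (r choose k)"
  by (simp add: binomial_gbinomial gbinomial_pochhammer)

lemma falling_of_nat: "falling (real r) k = fact k * real (r choose k)"
  by (simp add: falling_eq_pochhammer pochhammer_minus_of_nat)

lemma falling_diff_of_nat: "x \<le> N \<Longrightarrow> falling (real N - real x) m = fact m * real ((N - x) choose m)"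
  by (metis falling_of_nat of_nat_diff)

definition falling_poly :: "nat \<Rightarrow> real poly" where
  "falling_poly k = (\<Prod>i<k. [:- real i, 1:])"

lemma poly_falling_poly [simp]: "poly (falling_poly k) x = falling x k"
  by (simp add: falling_poly_def falling_def poly_prod)

lemma degree_falling_poly [simp]: "degree (falling_poly k) = k"
  by (simp add: falling_poly_def degree_prod_eq_sum_degree)

lemma lead_coeff_falling_poly [simp]: "lead_coeff (falling_poly k) = 1"
  by (simp add: falling_poly_def lead_coeff_prod)

lemma coeff_falling_poly_self: "coeff (falling_poly k) k = 1"
  using lead_coeff_falling_poly[of k] by simp

lemma fdiff_pow_0 [simp]: "fdiff_pow 0 f = f"
  by (simp add: fdiff_pow_def)

lemma fdiff_pow_Suc: "fdiff_pow (Suc k) f y = fdiff_pow k f (y + 1) - fdiff_pow k f y"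
  by (simp add: fdiff_pow_def fdiff_def)

lemma fdiff_pow_sum:
  "fdiff_pow j (\<lambda>t. \<Sum>k\<in>A. c k * f k t) = (\<lambda>t. \<Sum>k\<in>A. c k * fdiff_pow j (f k) t)"
  by (induction j) (auto simp: fdiff_pow_Suc algebra_simps sum_subtractf[symmetric])

lemma fdiff_pow_lincomb:
  "fdiff_pow j (\<lambda>t. a * f t + b * g t) = (\<lambda>t. a * fdiff_pow j f t + b * fdiff_pow j g t)"
  by (induction j) (auto simp: fdiff_pow_Suc algebra_simps)

lemma fdiff_pow_cong:
  assumes "\<And>i. i \<le> j \<Longrightarrow> f (y + real i) = g (y + real i)"
  shows "fdiff_pow j f y = fdiff_pow j g y"
  using assms
proof (induction j arbitrary: y)
  case 0
  then show ?case by (metis add_0_right fdiff_pow_0 of_nat_0 order_refl)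
next
  case (Suc j)
  have "f (y + 1 + real i) = g (y + 1 + real i)" if "i \<le> j" for i
    using Suc.prems[of "Suc i"] that by (simp add: add.assoc)
  then show ?case
    using Suc by (simp add: fdiff_pow_Suc)
qed

lemma fdiff_pow_Suc_shift: "fdiff_pow k f (y + 1) = fdiff_pow k f y + fdiff_pow (Suc k) f y"
  by (simp add: fdiff_pow_Suc)

text \<open>The induction step of \<open>fdiff_pow_divide_linear\<close>, with \<open>d k\<close> standing for \<open>\<Delta>\<^sup>k g(y)\<close>, so that
  \<open>d k + d (Suc k)\<close> is \<open>\<Delta>\<^sup>k g(y + 1)\<close>.\<close>

lemma divided_falling_sum_step:
  fixes d :: "nat \<Rightarrow> real"
  shows "u * (\<Sum>k\<le>j. (d k + d (Suc k)) / fact k * falling (u - 1) k)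
          - (u - real (Suc j)) * (\<Sum>k\<le>j. d k / fact k * falling u k)
        = real (Suc j) * (\<Sum>k\<le>Suc j. d k / fact k * falling u k)"
proof (induction j)
  case 0
  then show ?case by (simp add: falling_Suc_shift algebra_simps)
next
  case (Suc j)
  define S where "S = (\<Sum>k\<le>j. d k / fact k * falling u k)"
  define T where "T = (\<Sum>k\<le>j. (d k + d (Suc k)) / fact k * falling (u - 1) k)"
  define F where "F = falling u (Suc j)"
  define c where "c = d (Suc j) / fact (Suc j)"
  define e where "e = d (Suc (Suc j)) / fact (Suc (Suc j))"
  have IH: "u * T - (u - real (Suc j)) * S = real (Suc j) * (S + c * F)"
    using Suc.IH by (simp add: S_def T_def F_def c_def)
  have G: "u * falling (u - 1) (Suc j) = F * (u - real (Suc j))"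
    unfolding F_def by (metis falling_Suc falling_Suc_shift)
  have de: "d (Suc (Suc j)) / fact (Suc j) = real (Suc (Suc j)) * e"
    unfolding e_def fact_Suc[of "Suc j"] of_nat_Suc by (simp del: fact_Suc)
  have T': "(\<Sum>k\<le>Suc j. (d k + d (Suc k)) / fact k * falling (u - 1) k)
      = T + (c + real (Suc (Suc j)) * e) * falling (u - 1) (Suc j)"
    by (simp only: sum.atMost_Suc[of _ j] T_def c_def de add_divide_distrib)
  have S': "(\<Sum>k\<le>Suc j. d k / fact k * falling u k) = S + c * F"
    by (simp only: sum.atMost_Suc[of _ j] S_def c_def F_def mult.assoc)
  have S'': "(\<Sum>k\<le>Suc (Suc j). d k / fact k * falling u k) = S + c * F + e * (F * (u - real (Suc j)))"
    by (simp only: sum.atMost_Suc[of _ "Suc j"] S' e_def F_def falling_Suc mult.assoc)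
  show ?case
    unfolding T' S' S'' using IH G by (simp add: algebra_simps) algebra
qed

lemma fdiff_pow_divide_linear:
  assumes "\<forall>i\<le>j. x - y \<noteq> real i"
  shows "fdiff_pow j (\<lambda>t. g t / (x - t)) y
    = fact j / falling (x - y) (Suc j) * (\<Sum>k\<le>j. fdiff_pow k g y / fact k * falling (x - y) k)"
  using assms
proof (induction j arbitrary: y)
  case 0
  then show ?case by (simp add: falling_Suc)
next
  case (Suc j)
  define u where "u = x - y"
  define S where "S = (\<Sum>k\<le>j. fdiff_pow k g y / fact k * falling u k)"
  define T where "T = (\<Sum>k\<le>j. (fdiff_pow k g y + fdiff_pow (Suc k) g y) / fact k * falling (u - 1) k)"
  have shifted: "\<forall>i\<le>j. x - (y + 1) \<noteq> real i"
    using Suc.prems by (auto dest: spec[of _ "Suc _"])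
  have falling_u_nonzero: "falling u k \<noteq> 0" if "k \<le> Suc (Suc j)" for k
    using Suc.prems that unfolding u_def by (intro falling_nonzero) auto
  have nonzero: "u \<noteq> 0" "u - real (Suc j) \<noteq> 0" "falling u (Suc j) \<noteq> 0"
      "falling (u - 1) (Suc j) \<noteq> 0"
    using Suc.prems[rule_format, of 0] Suc.prems[rule_format, of "Suc j"]
      falling_u_nonzero[of "Suc j"] falling_u_nonzero[of "Suc (Suc j)"]
      falling_Suc_shift[of u "Suc j"]
    by (simp_all add: u_def)
  have at_shift: "fdiff_pow j (\<lambda>t. g t / (x - t)) (y + 1) = fact j / falling (u - 1) (Suc j) * T"
    using Suc.IH[OF shifted] by (simp add: u_def T_def fdiff_pow_Suc_shift diff_diff_eq)
  have at_y: "fdiff_pow j (\<lambda>t. g t / (x - t)) y = fact j / falling u (Suc j) * S"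
    using Suc.IH[of y] Suc.prems by (simp add: u_def S_def)
  have T_term: "fact j / falling (u - 1) (Suc j) * T = fact j * (u * T) / falling u (Suc (Suc j))"
    using nonzero by (simp add: falling_Suc_shift[of u "Suc j"])
  have S_term: "fact j / falling u (Suc j) * S
      = fact j * ((u - real (Suc j)) * S) / falling u (Suc (Suc j))"
    using nonzero by (simp add: falling_Suc[of u "Suc j"])
  have "fdiff_pow (Suc j) (\<lambda>t. g t / (x - t)) y
      = fact j * (u * T - (u - real (Suc j)) * S) / falling u (Suc (Suc j))"
    by (simp only: fdiff_pow_Suc at_shift at_y T_term S_term diff_divide_distrib right_diff_distrib)
  also have "u * T - (u - real (Suc j)) * S
      = real (Suc j) * (\<Sum>k\<le>Suc j. fdiff_pow k g y / fact k * falling u k)"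
    unfolding S_def T_def by (rule divided_falling_sum_step)
  finally show ?case
    by (simp add: u_def)
qed

section \<open>Binomial sums\<close>

lemma sum_choose_choose_reindex:
  fixes a :: real
  shows "(\<Sum>x=0..N. real (N choose x) * real (x choose k) * a ^ x * f (N - x))
       = real (N choose k) * a ^ k * (\<Sum>y=0..N-k. real ((N - k) choose y) * a ^ y * f (N - k - y))"
proof (cases "k \<le> N")
  case False
  then show ?thesis by (subst sum.neutral) (auto simp: binomial_eq_0)
next
  case True
  have "(\<Sum>x=0..N. real (N choose x) * real (x choose k) * a ^ x * f (N - x))
      = (\<Sum>x=k..N. real (N choose x) * real (x choose k) * a ^ x * f (N - x))"
    by (rule sum.mono_neutral_right) auto
  also have "\<dots> = (\<Sum>y=0..N-k. real (N choose (y + k)) * real ((y + k) choose k) * a ^ (y + k) * f (N - (y + k)))"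
    using True sum.shift_bounds_cl_nat_ivl[of "\<lambda>x. real (N choose x) * real (x choose k) * a ^ x * f (N - x)" 0 k "N - k"]
    by simp
  also have "\<dots> = (\<Sum>y=0..N-k. real (N choose k) * a ^ k * (real ((N - k) choose y) * a ^ y * f (N - k - y)))"
  proof (rule sum.cong)
    fix y assume "y \<in> {0..N-k}"
    then have "(N choose (y + k)) * ((y + k) choose k) = (N choose k) * ((N - k) choose y)"
      using choose_mult[of k "y + k" N] True by simp
    then show "real (N choose (y + k)) * real ((y + k) choose k) * a ^ (y + k) * f (N - (y + k))
        = real (N choose k) * a ^ k * (real ((N - k) choose y) * a ^ y * f (N - k - y))"
      by (metis (no_types, opaque_lifting) diff_diff_left of_nat_mult power_add add.commute mult.assoc mult.left_commute)
  qed simp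
  finally show ?thesis
    by (simp add: sum_distrib_left)
qed

lemma sum_choose_choose_binomial:
  fixes a b :: real
  shows "(\<Sum>x=0..N. real (N choose x) * real (x choose k) * a ^ x * b ^ (N - x))
       = real (N choose k) * a ^ k * (a + b) ^ (N - k)"
  unfolding sum_choose_choose_reindex[where f = "\<lambda>i. b ^ i"] binomial_ring atLeast0AtMost[of "N - k"] ..

lemma binomial_factorial_moment:
  fixes p q :: real
  assumes "p + q = 1"
  shows "(\<Sum>x=0..N. real (N choose x) * real (x choose k) * real ((N - x) choose m) * p ^ x * q ^ (N - x))
       = real (N choose k) * real ((N - k) choose m) * p ^ k * q ^ m"
proof -
  define A where "A = N - k"
  have "(\<Sum>x=0..N. real (N choose x) * real (x choose k) * real ((N - x) choose m) * p ^ x * q ^ (N - x))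
      = (\<Sum>x=0..N. real (N choose x) * real (x choose k) * p ^ x * (real ((N - x) choose m) * q ^ (N - x)))"
    by (simp add: mult_ac)
  also have "\<dots> = real (N choose k) * p ^ k
      * (\<Sum>y=0..A. real (A choose y) * p ^ y * (real ((A - y) choose m) * q ^ (A - y)))"
    unfolding A_def by (rule sum_choose_choose_reindex)
  also have "(\<Sum>y=0..A. real (A choose y) * p ^ y * (real ((A - y) choose m) * q ^ (A - y)))
      = (\<Sum>z=0..A. real (A choose z) * real (z choose m) * q ^ z * p ^ (A - z))"
    by (subst sum.atLeastAtMost_rev) (auto intro!: sum.cong simp: binomial_symmetric[symmetric])
  also have "\<dots> = real (A choose m) * q ^ m * (q + p) ^ (A - m)"
    by (rule sum_choose_choose_binomial)
  finally show ?thesis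
    using assms by (simp add: A_def add.commute)
qed

lemma alternating_sum_Suc:
  fixes f :: "nat \<Rightarrow> real"
  shows "(\<Sum>k=0..Suc n. (-1) ^ k * real (Suc n choose k) * f k)
       = (\<Sum>k=0..n. (-1) ^ k * real (n choose k) * (f k - f (Suc k)))"
proof -
  have "(\<Sum>k=0..Suc n. real (Suc n choose k) * g k) = (\<Sum>k=0..n. real (n choose k) * (g k + g (Suc k)))"
    for g :: "nat \<Rightarrow> real"
  proof -
    have "(\<Sum>k=0..Suc n. real (Suc n choose k) * g k)
        = g 0 + (\<Sum>k=0..n. real (n choose k) * g (Suc k)) + (\<Sum>k=0..n. real (n choose Suc k) * g (Suc k))"
      by (subst sum.atLeast0_atMost_Suc_shift) (simp add: sum.distrib[symmetric] algebra_simps)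
    moreover have "(\<Sum>k=0..n. real (n choose k) * g k) = g 0 + (\<Sum>k=0..n. real (n choose Suc k) * g (Suc k))"
      using sum.atLeast0_atMost_Suc_shift[of "\<lambda>k. real (n choose k) * g k" n] by (simp add: binomial_eq_0)
    ultimately show ?thesis
      by (simp add: sum.distrib algebra_simps)
  qed
  from this[of "\<lambda>k. (-1) ^ k * f k"] show ?thesis
    by (simp add: algebra_simps)
qed

lemma alternating_sum_falling:
  "m < n \<Longrightarrow> (\<Sum>k=0..n. (-1) ^ k * real (n choose k) * falling (a - real k) m) = 0"
proof (induction n arbitrary: m a)
  case 0
  then show ?case by simp
next
  case (Suc n)
  show ?case
  proof (cases m)
    case 0
    then show ?thesis
      using choose_alternating_sum[of "Suc n", where 'a = real] by (simp add: atLeast0AtMost)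
  next
    case (Suc m')
    have diff: "falling (a - real k) m - falling (a - real (Suc k)) m = real m * falling (a - 1 - real k) m'" for k
      unfolding Suc falling_Suc_shift[of "a - real k"] falling_Suc[of "a - real (Suc k)"]
      by (simp add: algebra_simps)
    have "(\<Sum>k=0..Suc n. (-1) ^ k * real (Suc n choose k) * falling (a - real k) m)
        = (\<Sum>k=0..n. (-1) ^ k * real (n choose k) * (real m * falling (a - 1 - real k) m'))"
      unfolding alternating_sum_Suc diff ..
    also have "\<dots> = real m * (\<Sum>k=0..n. (-1) ^ k * real (n choose k) * falling (a - 1 - real k) m')"
      by (simp add: sum_distrib_left mult_ac)
    also have "\<dots> = 0"
      using Suc.IH[of m' "a - 1"] Suc Suc.prems by simp
    finally show ?thesis .
  qed
qed

section \<open>Orthogonal polynomials on a finite set\<close>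

lemma graded_basis_expansion:
  fixes B :: "nat \<Rightarrow> 'a::field poly"
  assumes "\<And>j. j \<le> d \<Longrightarrow> degree (B j) = j" "\<And>j. j \<le> d \<Longrightarrow> B j \<noteq> 0" "degree q \<le> d"
  shows "\<exists>a. q = (\<Sum>j\<le>d. smult (a j) (B j))"
  using assms
proof (induction d arbitrary: q)
  case 0
  then obtain c b where "q = [:c:]" "B 0 = [:b:]" "b \<noteq> 0"
    by (metis degree_eq_zeroE le_zero_eq order_refl pCons_0_0)
  then show ?case
    by (intro exI[of _ "\<lambda>_. c / b"]) simp
next
  case (Suc d)
  define c where "c = coeff q (Suc d) / lead_coeff (B (Suc d))"
  define r where "r = q - smult c (B (Suc d))"
  have "coeff r i = 0" if "i > d" for i
  proof (cases "i = Suc d")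
    case True
    then show ?thesis
      using Suc.prems(1,2)[of "Suc d"] by (metis leading_coeff_0_iff order_refl r_def c_def coeff_diff coeff_smult
        nonzero_eq_divide_eq diff_self)
  next
    case False
    with that Suc.prems show ?thesis
      by (auto simp: r_def coeff_eq_0)
  qed
  then have "degree r \<le> d"
    by (simp add: degree_le)
  then obtain a where "r = (\<Sum>j\<le>d. smult (a j) (B j))"
    using Suc by auto
  then have "q = (\<Sum>j\<le>Suc d. smult ((a(Suc d := c)) j) (B j))"
    by (simp add: r_def diff_eq_eq)
  then show ?case by blast
qed

definition discrete_inner :: "real set \<Rightarrow> (real \<Rightarrow> real) \<Rightarrow> real poly \<Rightarrow> real poly \<Rightarrow> real" where
  "discrete_inner S w f g = (\<Sum>t\<in>S. poly f t * poly g t * w t)"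

lemma discrete_inner_commute: "discrete_inner S w f g = discrete_inner S w g f"
  by (simp add: discrete_inner_def mult_ac)

lemma discrete_inner_diff_left: "discrete_inner S w (f - g) h = discrete_inner S w f h - discrete_inner S w g h"
  by (simp add: discrete_inner_def algebra_simps sum_subtractf)

lemma discrete_inner_diff_right: "discrete_inner S w f (g - h) = discrete_inner S w f g - discrete_inner S w f h"
  by (simp add: discrete_inner_def algebra_simps sum_subtractf)

lemma discrete_inner_sum_smult_right:
  "discrete_inner S w f (\<Sum>j\<in>A. smult (a j) (g j)) = (\<Sum>j\<in>A. a j * discrete_inner S w f (g j))"
  by (simp add: discrete_inner_def poly_sum sum_distrib_left sum_distrib_right mult_ac sum.swap[of _ A])

lemma discrete_inner_mult_x: "discrete_inner S w ([:0, 1:] * f) g = discrete_inner S w f ([:0, 1:] * g)"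
  by (simp add: discrete_inner_def mult_ac)

locale finite_orthogonal_polys =
  fixes S :: "real set" and w :: "real \<Rightarrow> real" and P :: "nat \<Rightarrow> real poly" and M :: nat
  assumes finite_support: "finite S"
    and weight_pos: "\<And>t. t \<in> S \<Longrightarrow> 0 < w t"
    and card_support: "M < card S"
    and degree_P: "\<And>k. k \<le> M \<Longrightarrow> degree (P k) = k"
    and monic_P: "\<And>k. k \<le> M \<Longrightarrow> lead_coeff (P k) = 1"
    and orthogonal_P: "\<And>k q. k \<le> M \<Longrightarrow> degree q < k \<Longrightarrow> discrete_inner S w (P k) q = 0"
begin

abbreviation inner :: "real poly \<Rightarrow> real poly \<Rightarrow> real" where
  "inner \<equiv> discrete_inner S w"

lemma inner_self_pos:
  assumes "f \<noteq> 0" "degree f < card S"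
  shows "0 < inner f f"
proof -
  have "card S \<le> card {t. poly f t = 0}" if "\<forall>t\<in>S. poly f t = 0"
    using that assms(1) by (intro card_mono poly_roots_finite) auto
  then obtain t where "t \<in> S" "poly f t \<noteq> 0"
    using card_poly_roots_bound[OF assms(1)] assms(2) by fastforce
  then have "0 < poly f t * poly f t * w t"
    using weight_pos[of t] by (metis mult_pos_pos not_real_square_gt_zero)
  moreover have "0 \<le> poly f s * poly f s * w s" if "s \<in> S" for s
    using weight_pos[OF that] by (metis less_imp_le mult_nonneg_nonneg zero_le_square)
  ultimately show ?thesis
    unfolding discrete_inner_def by (rule sum_pos2[OF finite_support \<open>t \<in> S\<close>])
qed

lemma norm_P_pos: "k \<le> M \<Longrightarrow> 0 < inner (P k) (P k)"
  using card_support degree_P[of k] monic_P[of k] by (intro inner_self_pos) auto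

lemma inner_P_P:
  assumes "i \<le> M" "k \<le> M" "i \<noteq> k"
  shows "inner (P i) (P k) = 0"
proof (cases "i < k")
  case True
  then show ?thesis
    using assms by (simp add: discrete_inner_commute[of _ _ "P i"] orthogonal_P degree_P)
next
  case False
  then show ?thesis
    using assms by (simp add: orthogonal_P degree_P)
qed

lemma fourier_expansion:
  assumes "d \<le> M" "degree q \<le> d"
  shows "q = (\<Sum>j\<le>d. smult (inner q (P j) / inner (P j) (P j)) (P j))"
proof -
  have "degree (P j) = j" "P j \<noteq> 0" if "j \<le> d" for j
    using that assms(1) degree_P[of j] monic_P[of j] by auto
  then obtain a where a: "q = (\<Sum>j\<le>d. smult (a j) (P j))"
    using graded_basis_expansion[of d P q] assms(2) by blast
  have "a i = inner q (P i) / inner (P i) (P i)" if "i \<le> d" for i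
  proof -
    have "inner (P i) q = (\<Sum>j\<le>d. a j * inner (P i) (P j))"
      by (subst a) (rule discrete_inner_sum_smult_right)
    also have "\<dots> = (\<Sum>j\<le>d. if j = i then a i * inner (P i) (P i) else 0)"
      using that assms(1) by (intro sum.cong) (auto simp: inner_P_P)
    finally show ?thesis
      using that assms(1) norm_P_pos[of i] by (simp add: discrete_inner_commute)
  qed
  then show ?thesis
    by (subst a) (auto intro!: sum.cong)
qed

lemma inner_P_mult_x_lower:
  assumes "k \<le> M" "Suc j < k"
  shows "inner (P k) ([:0, 1:] * P j) = 0"
proof -
  have "degree ([:0, 1:] * P j) \<le> Suc j"
    using assms degree_P[of j] degree_mult_le[of "[:0, 1:]" "P j"] by simp
  with assms show ?thesis
    by (simp add: orthogonal_P)
qed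

lemma inner_P_mult_x_pred:
  assumes "Suc k \<le> M"
  shows "inner (P (Suc k)) ([:0, 1:] * P k) = inner (P (Suc k)) (P (Suc k))"
proof -
  define r where "r = [:0, 1:] * P k - P (Suc k)"
  have "coeff r i = 0" if "i \<ge> Suc k" for i
    using that assms degree_P[of k] degree_P[of "Suc k"] monic_P[of k] monic_P[of "Suc k"]
    by (cases "i = Suc k") (auto simp: r_def coeff_eq_0)
  then have "degree r < Suc k"
    by (meson degree_le less_Suc_eq_le not_less)
  then have "inner (P (Suc k)) r = 0"
    by (rule orthogonal_P[OF assms])
  then show ?thesis
    by (simp add: r_def discrete_inner_diff_right)
qed

lemma three_term_recurrence:
  assumes "Suc k \<le> M"
  shows "[:0, 1:] * P k = P (Suc k) + smult (inner ([:0, 1:] * P k) (P k) / inner (P k) (P k)) (P k)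
    + (if k = 0 then 0 else smult (inner (P k) (P k) / inner (P (k - 1)) (P (k - 1))) (P (k - 1)))"
proof -
  define r where "r = [:0, 1:] * P k - P (Suc k)"
  define c where "c j = inner (P k) ([:0, 1:] * P j) / inner (P j) (P j)" for j
  have "coeff r i = 0" if "i > k" for i
    using that assms degree_P[of k] degree_P[of "Suc k"] monic_P[of k] monic_P[of "Suc k"]
    by (cases "i = Suc k") (auto simp: r_def coeff_eq_0)
  then have "r = (\<Sum>j\<le>k. smult (inner r (P j) / inner (P j) (P j)) (P j))"
    using assms by (intro fourier_expansion) (auto intro: degree_le)
  also have "\<dots> = (\<Sum>j\<le>k. smult (c j) (P j))"
  proof (intro sum.cong refl)
    fix j assume "j \<in> {..k}"
    then have "inner (P (Suc k)) (P j) = 0"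
      using assms by (intro inner_P_P) auto
    then show "smult (inner r (P j) / inner (P j) (P j)) (P j) = smult (c j) (P j)"
      by (simp only: r_def c_def discrete_inner_diff_left discrete_inner_mult_x diff_zero)
  qed
  also have "\<dots> = smult (c k) (P k) + (if k = 0 then 0 else smult (c (k - 1)) (P (k - 1)))"
  proof (cases k)
    case (Suc k')
    have "c j = 0" if "j < k'" for j
      using that assms Suc inner_P_mult_x_lower[of k j] by (simp add: c_def)
    then have "(\<Sum>j<k'. smult (c j) (P j)) = 0"
      by (intro sum.neutral) simp
    then show ?thesis
      by (simp add: Suc lessThan_Suc_atMost[symmetric])
  qed simp
  finally have "[:0, 1:] * P k - P (Suc k)
      = smult (c k) (P k) + (if k = 0 then 0 else smult (c (k - 1)) (P (k - 1)))"
    by (simp only: r_def)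
  moreover have "c k = inner ([:0, 1:] * P k) (P k) / inner (P k) (P k)"
    by (simp add: c_def discrete_inner_commute)
  moreover have "c (k - 1) = inner (P k) (P k) / inner (P (k - 1)) (P (k - 1))" if "k \<noteq> 0"
    using that assms inner_P_mult_x_pred[of "k - 1"] by (simp add: c_def)
  ultimately show ?thesis
    by (cases "k = 0") (simp_all add: diff_eq_eq add.commute add.left_commute)
qed

lemma christoffel_darboux:
  assumes "1 \<le> n" "n \<le> M" "x \<noteq> y"
  shows "(\<Sum>k<n. poly (P k) x * poly (P k) y / inner (P k) (P k))
    = (poly (P n) x * poly (P (n - 1)) y - poly (P (n - 1)) x * poly (P n) y)
      / (inner (P (n - 1)) (P (n - 1)) * (x - y))"
  using assms(1,2)
proof (induction n rule: dec_induct)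
  case base
  define b where "b = inner ([:0, 1:] * P 0) (P 0) / inner (P 0) (P 0)"
  have P0: "P 0 = 1"
    using degree_P[of 0] monic_P[of 0] by (auto elim: degree_eq_zeroE)
  have P1: "poly (P (Suc 0)) t = t - b" for t
    using arg_cong[OF three_term_recurrence[of 0], of "\<lambda>p. poly p t"] assms(1,2)
    by (simp add: b_def P0)
  show ?case
    unfolding One_nat_def P1 using assms norm_P_pos[of 0] by (simp add: P0 field_simps)
next
  case (step m)
  define h where "h k = inner (P k) (P k)" for k
  define b where "b = inner ([:0, 1:] * P m) (P m) / h m"
  define K where "K k t = poly (P k) t" for k t
  have h_pos: "0 < h m" "0 < h (m - 1)"
    using step norm_P_pos by (auto simp: h_def)
  have "[:0, 1:] * P m = P (Suc m) + smult b (P m) + smult (h m / h (m - 1)) (P (m - 1))"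
    using three_term_recurrence[of m] step by (simp add: h_def b_def)
  from arg_cong[OF this, of "\<lambda>p. poly p t" for t]
  have rec: "K (Suc m) t = (t - b) * K m t - h m / h (m - 1) * K (m - 1) t" for t
    by (simp add: K_def algebra_simps)
  have numerator: "K (Suc m) x * K m y - K m x * K (Suc m) y
      = (x - y) * K m x * K m y + h m / h (m - 1) * (K m x * K (m - 1) y - K (m - 1) x * K m y)"
    by (simp add: rec algebra_simps)
  have "(\<Sum>k<Suc m. K k x * K k y / h k)
      = (K m x * K (m - 1) y - K (m - 1) x * K m y) / (h (m - 1) * (x - y)) + K m x * K m y / h m"
    using step by (simp add: h_def K_def)
  also have "\<dots> = (K (Suc m) x * K m y - K m x * K (Suc m) y) / (h m * (x - y))"
    unfolding numerator using h_pos assms(3) by (simp add: field_simps)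
  finally show ?case
    by (simp add: h_def K_def)
qed

end

section \<open>Kravchuk polynomials\<close>

lemma kravchuk_of_nat:
  "kravchuk N p n (real x) = p ^ n * pochhammer (- real N) n
     * (\<Sum>k=0..n. pochhammer (- real n) k / (real (N choose k) * fact k) * p powi - int k * real (x choose k))"
  unfolding kravchuk_def
proof (intro arg_cong[where f = "(*) _"] sum.cong refl)
  fix k
  define s :: real where "s = (-1) ^ k * fact k"
  have "s \<noteq> 0"
    by (simp add: s_def)
  have "a * (s * X) / (s * Y * f) = a * X / (Y * f)" for a X Y f :: real
  proof -
    have "a * (s * X) / (s * Y * f) = (s * (a * X)) / (s * (Y * f))"
      by (simp only: mult_ac)
    then show ?thesis
      by (simp only: mult_divide_mult_cancel_left[OF \<open>s \<noteq> 0\<close>])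
  qed
  then show "pochhammer (- real n) k * pochhammer (- real x) k / (pochhammer (- real N) k * fact k) * p powi - int k
      = pochhammer (- real n) k / (real (N choose k) * fact k) * p powi - int k * real (x choose k)"
    by (simp add: pochhammer_minus_of_nat s_def[symmetric] mult.assoc)
qed

lemma kravchuk_orthogonal_falling:
  assumes "m < n" "n \<le> N" "0 < p"
  shows "(\<Sum>x=0..N. kravchuk N p n (real x) * falling (real N - real x) m * kweight N p x) = 0"
proof -
  define C' where "C' = p ^ n * pochhammer (- real N) n * (1 - p) ^ m"
  define C where "C = p ^ n * pochhammer (- real N) n * fact m"
  define c where "c k = pochhammer (- real n) k / (real (N choose k) * fact k) * p powi - int k" for k
  define T where "T k x = real (N choose x) * real (x choose k) * real ((N - x) choose m) * p ^ x * (1 - p) ^ (N - x)"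
    for k x
  have "(\<Sum>x=0..N. kravchuk N p n (real x) * falling (real N - real x) m * kweight N p x)
      = (\<Sum>x=0..N. \<Sum>k=0..n. C * c k * T k x)"
  proof (intro sum.cong refl)
    fix x assume "x \<in> {0..N}"
    then have "falling (real N - real x) m = fact m * real ((N - x) choose m)"
      by (simp add: falling_diff_of_nat)
    then show "kravchuk N p n (real x) * falling (real N - real x) m * kweight N p x
        = (\<Sum>k=0..n. C * c k * T k x)"
      unfolding kravchuk_of_nat kweight_def C_def c_def T_def
      by (simp add: sum_distrib_left sum_distrib_right mult_ac)
  qed
  also have "\<dots> = (\<Sum>k=0..n. C * c k * (\<Sum>x=0..N. T k x))"
    by (simp add: sum.swap[of _ "{0..n}"] sum_distrib_left)
  also have "\<dots> = (\<Sum>k=0..n. C' * ((-1) ^ k * real (n choose k) * falling (real N - real k) m))"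
  proof (intro sum.cong refl)
    fix k assume "k \<in> {0..n}"
    then have "k \<le> N"
      using assms by simp
    then have "real (N choose k) \<noteq> 0"
      by simp
    then have "c k * real (N choose k) * p ^ k = pochhammer (- real n) k / fact k * (p powi - int k * p ^ k)"
      by (simp add: c_def field_simps)
    also have "\<dots> = (-1) ^ k * real (n choose k)"
      using assms(3) by (simp add: pochhammer_minus_of_nat power_int_minus)
    finally have c: "c k * real (N choose k) * p ^ k = (-1) ^ k * real (n choose k)" .
    have "C * c k * (\<Sum>x=0..N. T k x)
        = C * c k * (real (N choose k) * real ((N - k) choose m) * p ^ k * (1 - p) ^ m)"
      unfolding T_def by (subst binomial_factorial_moment) simp_all
    also have "\<dots> = C' * ((c k * real (N choose k) * p ^ k) * (fact m * real ((N - k) choose m)))"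
      by (simp add: C_def C'_def mult_ac)
    also have "\<dots> = C' * ((-1) ^ k * real (n choose k) * falling (real N - real k) m)"
      by (simp only: c falling_diff_of_nat[OF \<open>k \<le> N\<close>])
    finally show "C * c k * (\<Sum>x=0..N. T k x)
        = C' * ((-1) ^ k * real (n choose k) * falling (real N - real k) m)" .
  qed
  also have "\<dots> = 0"
    using alternating_sum_falling[OF assms(1), of "real N"] by (simp add: sum_distrib_left[symmetric])
  finally show ?thesis .
qed

text \<open>The coefficients absorb the sign in \<open>pochhammer (- x) k = (-1) ^ k * falling x k\<close>.\<close>

definition kravchuk_poly :: "nat \<Rightarrow> real \<Rightarrow> nat \<Rightarrow> real poly" where
  "kravchuk_poly N p n = smult (p ^ n * pochhammer (- real N) n)
     (\<Sum>k=0..n. smult (pochhammer (- real n) k / (pochhammer (- real N) k * fact k) * p powi - int k * (-1) ^ k)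
        (falling_poly k))"

lemma poly_kravchuk_poly: "poly (kravchuk_poly N p n) x = kravchuk N p n x"
  by (simp add: kravchuk_poly_def kravchuk_def poly_sum pochhammer_minus[of x] mult_ac)

lemma degree_kravchuk_poly:
  assumes "n \<le> N" "p \<noteq> 0"
  shows "degree (kravchuk_poly N p n) = n" "lead_coeff (kravchuk_poly N p n) = 1"
proof -
  define a where "a k = pochhammer (- real n) k / (pochhammer (- real N) k * fact k) * p powi - int k * (-1) ^ k"
    for k
  have K: "kravchuk_poly N p n = smult (p ^ n * pochhammer (- real N) n) (\<Sum>k=0..n. smult (a k) (falling_poly k))"
    by (simp add: kravchuk_poly_def a_def)
  have "degree (kravchuk_poly N p n) \<le> n"
    unfolding K by (intro order.trans[OF degree_smult_le] degree_sum_le) (auto intro: order.trans[OF degree_smult_le])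
  moreover have "coeff (kravchuk_poly N p n) n = 1"
  proof -
    have "coeff (\<Sum>k=0..n. smult (a k) (falling_poly k)) n = (\<Sum>k=0..n. if k = n then a n else 0)"
      unfolding coeff_sum by (intro sum.cong) (auto simp: coeff_eq_0 coeff_falling_poly_self)
    then have "coeff (kravchuk_poly N p n) n = p ^ n * pochhammer (- real N) n * a n"
      by (simp add: K)
    moreover have "pochhammer (- real N) n \<noteq> 0"
      using assms(1) by (auto simp: pochhammer_eq_0_iff)
    moreover have "(-1::real) ^ n * (-1) ^ n = 1"
      by (simp flip: power_mult_distrib)
    ultimately show ?thesis
      using assms(2) by (simp add: a_def pochhammer_minus_of_nat[of n] power_int_minus field_simps)
  qed
  moreover from this have "n \<le> degree (kravchuk_poly N p n)"
    by (intro le_degree) simp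
  ultimately show "degree (kravchuk_poly N p n) = n" "lead_coeff (kravchuk_poly N p n) = 1"
    by simp_all
qed

lemma kravchuk_orthogonal:
  assumes "degree q < n" "n \<le> N" "0 < p"
  shows "(\<Sum>x=0..N. kravchuk N p n (real x) * poly q (real x) * kweight N p x) = 0"
proof -
  define B where "B j = pcompose (falling_poly j) [:real N, -1:]" for j
  have "degree (B j) = j" "B j \<noteq> 0" for j
    using pcompose_eq_0[of "falling_poly j" "[:real N, -1:]"] coeff_falling_poly_self[of j]
    by (auto simp: B_def degree_pcompose)
  moreover have "degree q \<le> n - 1"
    using assms(1) by simp
  ultimately obtain a where a: "q = (\<Sum>j\<le>n - 1. smult (a j) (B j))"
    using graded_basis_expansion[of "n - 1" B q] by blast
  have "poly q (real x) = (\<Sum>j\<le>n - 1. a j * falling (real N - real x) j)" for x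
    by (simp add: a B_def poly_sum poly_pcompose)
  then have "(\<Sum>x=0..N. kravchuk N p n (real x) * poly q (real x) * kweight N p x)
      = (\<Sum>x=0..N. \<Sum>j\<le>n - 1. a j * (kravchuk N p n (real x) * falling (real N - real x) j * kweight N p x))"
    by (simp add: sum_distrib_left sum_distrib_right mult_ac)
  also have "\<dots> = (\<Sum>j\<le>n - 1. a j * (\<Sum>x=0..N. kravchuk N p n (real x) * falling (real N - real x) j * kweight N p x))"
    by (subst sum.swap) (simp add: sum_distrib_left)
  also have "\<dots> = 0"
    using assms by (intro sum.neutral) (auto intro!: kravchuk_orthogonal_falling)
  finally show ?thesis .
qed

definition kravchuk_weight :: "nat \<Rightarrow> real \<Rightarrow> real \<Rightarrow> real" where
  "kravchuk_weight N p t = kweight N p (nat \<lfloor>t\<rfloor>)"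

lemma sum_kravchuk_support:
  "(\<Sum>t\<in>real ` {0..N}. f t * kravchuk_weight N p t) = (\<Sum>x=0..N. f (real x) * kweight N p x)"
  by (simp add: sum.reindex inj_on_def kravchuk_weight_def)

lemma kravchuk_finite_orthogonal_polys:
  assumes "0 < p" "p < 1"
  shows "finite_orthogonal_polys (real ` {0..N}) (kravchuk_weight N p) (kravchuk_poly N p) N"
proof
  show "finite (real ` {0..N})" "N < card (real ` {0..N})"
    by (simp_all add: card_image inj_on_def)
  show "0 < kravchuk_weight N p t" if "t \<in> real ` {0..N}" for t
    using that assms by (auto simp: kravchuk_weight_def kweight_def)
  show "degree (kravchuk_poly N p k) = k" "lead_coeff (kravchuk_poly N p k) = 1" if "k \<le> N" for k
    using that assms degree_kravchuk_poly by simp_all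
  show "discrete_inner (real ` {0..N}) (kravchuk_weight N p) (kravchuk_poly N p k) q = 0"
    if "k \<le> N" "degree q < k" for k q
    using that assms
    by (simp add: discrete_inner_def sum_kravchuk_support poly_kravchuk_poly kravchuk_orthogonal)
qed

lemma knorm2_eq_inner:
  "knorm2 N p k = discrete_inner (real ` {0..N}) (kravchuk_weight N p) (kravchuk_poly N p k) (kravchuk_poly N p k)"
  by (simp add: discrete_inner_def sum_kravchuk_support knorm2_def poly_kravchuk_poly
      power2_eq_square)

lemma kravchuk_christoffel_darboux:
  assumes "0 < p" "p < 1" "1 \<le> n" "n \<le> N" "x \<noteq> y"
  shows "(\<Sum>k<n. kravchuk N p k x * kravchuk N p k y / knorm2 N p k)
    = (kravchuk N p n x * kravchuk N p (n - 1) y - kravchuk N p (n - 1) x * kravchuk N p n y)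
      / (knorm2 N p (n - 1) * (x - y))"
  using finite_orthogonal_polys.christoffel_darboux[OF kravchuk_finite_orthogonal_polys[OF assms(1,2)] assms(3-5)]
  by (simp add: knorm2_eq_inner poly_kravchuk_poly)

lemma kkernel_0_eq_fdiff_pow:
  assumes "0 < p" "p < 1" "1 \<le> n" "n \<le> N" "\<forall>i\<le>j. x - y \<noteq> real i"
  shows "kkernel N p n 0 j x y = fdiff_pow j (\<lambda>t.
    (kravchuk N p n x * kravchuk N p (n - 1) t - kravchuk N p (n - 1) x * kravchuk N p n t)
      / (knorm2 N p (n - 1) * (x - t))) y"
proof -
  have "kkernel N p n 0 j x y = fdiff_pow j (\<lambda>t. \<Sum>k<n. kravchuk N p k x / knorm2 N p k * kravchuk N p k t) y"
    unfolding kkernel_def fdiff_pow_sum fdiff_pow_0 by (simp add: mult_ac)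
  also have "\<dots> = fdiff_pow j (\<lambda>t.
    (kravchuk N p n x * kravchuk N p (n - 1) t - kravchuk N p (n - 1) x * kravchuk N p n t)
      / (knorm2 N p (n - 1) * (x - t))) y"
  proof (rule fdiff_pow_cong)
    fix i assume "i \<le> j"
    then have "x \<noteq> y + real i"
      using assms(5) by auto
    then show "(\<Sum>k<n. kravchuk N p k x / knorm2 N p k * kravchuk N p k (y + real i))
      = (kravchuk N p n x * kravchuk N p (n - 1) (y + real i) - kravchuk N p (n - 1) x * kravchuk N p n (y + real i))
        / (knorm2 N p (n - 1) * (x - (y + real i)))"
      using kravchuk_christoffel_darboux[OF assms(1-4)] by (simp add: mult_ac)
  qed
  finally show ?thesis .
qed

theorem proposition2p2:
  fixes N n j :: nat and p x y :: real
  assumes "N \<ge> 1" and "0 < p" and "p < 1"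
    and "1 \<le> n" and "n \<le> N"
    and "\<forall>i\<le>j. x - y \<noteq> real i"
  shows "kkernel N p n 0 j x y =
           kA N p n j x y * kravchuk N p n x + kB N p n j x y * kravchuk N p (n - 1) x"
proof -
  define h where "h = knorm2 N p (n - 1)"
  define a where "a = kravchuk N p n x / h"
  define b where "b = - (kravchuk N p (n - 1) x / h)"
  define D where "D m k = fdiff_pow k (kravchuk N p m) y / fact k * falling (x - y) k" for m k
  have "kkernel N p n 0 j x y = fdiff_pow j (\<lambda>t. (a * kravchuk N p (n - 1) t + b * kravchuk N p n t) / (x - t)) y"
    unfolding kkernel_0_eq_fdiff_pow[OF assms(2-6)] a_def b_def h_def
    by (simp add: diff_divide_distrib add_divide_distrib mult_ac)
  also have "\<dots> = fact j / falling (x - y) (Suc j) * (\<Sum>k\<le>j. a * D (n - 1) k + b * D n k)"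
    unfolding fdiff_pow_divide_linear[OF assms(6), of "\<lambda>t. a * kravchuk N p (n - 1) t + b * kravchuk N p n t"]
      fdiff_pow_lincomb
    by (simp add: D_def add_divide_distrib distrib_right mult.assoc)
  also have "\<dots> = fact j / falling (x - y) (Suc j) * (a * (\<Sum>k\<le>j. D (n - 1) k) + b * (\<Sum>k\<le>j. D n k))"
    by (simp add: sum.distrib sum_distrib_left)
  also have "\<dots> = kA N p n j x y * kravchuk N p n x + kB N p n j x y * kravchuk N p (n - 1) x"
    unfolding kA_def kB_def a_def b_def h_def D_def atLeast0AtMost
    by (simp add: algebra_simps divide_inverse inverse_mult_distrib)
  finally show ?thesis .
qed

end
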